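(* Let $G$ be a chordal graph and let $\{C_1,\dots,C_k\}$ be a perfect ordering of its maximal cliques. Define $c:=\max_{i}|C_i|=\omega(G)$ and $s:=\max_i|S_i|$, where $S_i:=(C_1\cup\dots\cup C_{i-1})\cap C_i$ (with $S_1=\emptyset$). If $f:\mathbb{R}\to\mathbb{R}$ is such that $f[-]$ preserves positivity on $\mathcal{P}_{K_c}$ and is Loewner super-additive on $\mathcal{P}_{K_s}$, then $f[-]$ preserves positivity on $\mathcal{P}_G$.
   Context: Graphs are finite and simple; chordal means every cycle on at least four vertices has a chord; $\omega(G)$ is the clique number; $K_m$ is the complete graph on $m$ vertices. For a sequence $B_1,\dots,B_k$ of vertex subsets, set $H_j=B_1\cup\dots\cup B_j$ ($H_0=\emptyset$), $S_j=H_{j-1}\cap B_j$; the sequence is a perfect ordering if (i) for every $1<i\le k$ there is $j<i$ with $S_i\subset B_j$, and (ii) each $S_i$ induces a complete graph. For a graph $H$ on $\{1,\dots,n\}$, $\mathcal{P}_H$ is the set of real symmetric positive semidefinite $n\times n$ matrices $M$ with $m_{ij}=0$ whenever $i\neq j$ and $(i,j)$ is not an edge (so $\mathcal{P}_{K_n}$ is all $n\times n$ PSD matrices). $f[M]:=(f(m_{ij}))$; $f[-]$ preserves positivity on $\mathcal{P}_H$ if $f[M]\in\mathcal{P}_H$ for all $M\in\mathcal{P}_H$. Loewner super-additivity on $\mathcal{P}_H$ is defined for $f$ with $f(0)=0$: $f[M+N]-f[M]-f[N]\in\mathcal{P}_H$ for all $M,N\in\mathcal{P}_H$. *)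

theory Defs
  imports Complex_Main
begin

definition simple_graph :: "nat \<Rightarrow> (nat \<Rightarrow> nat \<Rightarrow> bool) \<Rightarrow> bool" where
  "simple_graph n E \<longleftrightarrow> (\<forall>i j. E i j \<longrightarrow> i < n \<and> j < n) \<and>
     (\<forall>i j. E i j \<longrightarrow> E j i) \<and> (\<forall>i. \<not> E i i)"

definition is_cycle :: "nat \<Rightarrow> (nat \<Rightarrow> nat \<Rightarrow> bool) \<Rightarrow> nat list \<Rightarrow> bool" where
  "is_cycle n E vs \<longleftrightarrow> length vs \<ge> 3 \<and> distinct vs \<and> set vs \<subseteq> {0..<n} \<and>
     (\<forall>i < length vs. E (vs ! i) (vs ! ((i + 1) mod length vs)))"

definition has_chord :: "(nat \<Rightarrow> nat \<Rightarrow> bool) \<Rightarrow> nat list \<Rightarrow> bool" where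
  "has_chord E vs \<longleftrightarrow> (\<exists>i < length vs. \<exists>j < length vs. i \<noteq> j \<and>
     j \<noteq> (i + 1) mod length vs \<and> i \<noteq> (j + 1) mod length vs \<and> E (vs ! i) (vs ! j))"

definition chordal :: "nat \<Rightarrow> (nat \<Rightarrow> nat \<Rightarrow> bool) \<Rightarrow> bool" where
  "chordal n E \<longleftrightarrow> (\<forall>vs. is_cycle n E vs \<and> length vs \<ge> 4 \<longrightarrow> has_chord E vs)"

definition is_clique :: "nat \<Rightarrow> (nat \<Rightarrow> nat \<Rightarrow> bool) \<Rightarrow> nat set \<Rightarrow> bool" where
  "is_clique n E C \<longleftrightarrow> C \<subseteq> {0..<n} \<and> (\<forall>i\<in>C. \<forall>j\<in>C. i \<noteq> j \<longrightarrow> E i j)"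

definition maximal_clique :: "nat \<Rightarrow> (nat \<Rightarrow> nat \<Rightarrow> bool) \<Rightarrow> nat set \<Rightarrow> bool" where
  "maximal_clique n E C \<longleftrightarrow> is_clique n E C \<and> (\<forall>D. is_clique n E D \<and> C \<subseteq> D \<longrightarrow> D = C)"

text \<open>For a sequence B (0-indexed list), H_j = B_0 \<union> ... \<union> B_j and S_i = H_{i-1} \<inter> B_i (S_0 = {}).\<close>
definition sep_set :: "nat set list \<Rightarrow> nat \<Rightarrow> nat set" where
  "sep_set Bs i = (\<Union>j<i. Bs ! j) \<inter> Bs ! i"

definition perfect_ordering :: "nat \<Rightarrow> (nat \<Rightarrow> nat \<Rightarrow> bool) \<Rightarrow> nat set list \<Rightarrow> bool" where
  "perfect_ordering n E Bs \<longleftrightarrow>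
     (\<forall>i < length Bs. 0 < i \<longrightarrow> (\<exists>j < i. sep_set Bs i \<subseteq> Bs ! j)) \<and>
     (\<forall>i < length Bs. is_clique n E (sep_set Bs i))"

text \<open>Real matrices are functions nat \<Rightarrow> nat \<Rightarrow> real; only entries indexed in I matter.
  Symmetric positive semidefinite on the index set I.\<close>
definition psd_on :: "nat set \<Rightarrow> (nat \<Rightarrow> nat \<Rightarrow> real) \<Rightarrow> bool" where
  "psd_on I M \<longleftrightarrow> (\<forall>i\<in>I. \<forall>j\<in>I. M i j = M j i) \<and>
     (\<forall>x :: nat \<Rightarrow> real. 0 \<le> (\<Sum>i\<in>I. \<Sum>j\<in>I. x i * M i j * x j))"

definition in_PG :: "nat \<Rightarrow> (nat \<Rightarrow> nat \<Rightarrow> bool) \<Rightarrow> (nat \<Rightarrow> nat \<Rightarrow> real) \<Rightarrow> bool" where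
  "in_PG n E M \<longleftrightarrow> psd_on {0..<n} M \<and>
     (\<forall>i < n. \<forall>j < n. i \<noteq> j \<and> \<not> E i j \<longrightarrow> M i j = 0)"

definition complete_graph :: "nat \<Rightarrow> nat \<Rightarrow> nat \<Rightarrow> bool" where
  "complete_graph m i j \<longleftrightarrow> i < m \<and> j < m \<and> i \<noteq> j"

definition entrywise :: "(real \<Rightarrow> real) \<Rightarrow> (nat \<Rightarrow> nat \<Rightarrow> real) \<Rightarrow> (nat \<Rightarrow> nat \<Rightarrow> real)" where
  "entrywise f M = (\<lambda>i j. f (M i j))"

definition preserves_positivity :: "nat \<Rightarrow> (nat \<Rightarrow> nat \<Rightarrow> bool) \<Rightarrow> (real \<Rightarrow> real) \<Rightarrow> bool" where
  "preserves_positivity n E f \<longleftrightarrow> (\<forall>M. in_PG n E M \<longrightarrow> in_PG n E (entrywise f M))"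

definition loewner_superadditive :: "nat \<Rightarrow> (nat \<Rightarrow> nat \<Rightarrow> bool) \<Rightarrow> (real \<Rightarrow> real) \<Rightarrow> bool" where
  "loewner_superadditive n E f \<longleftrightarrow> f 0 = 0 \<and>
     (\<forall>M N. in_PG n E M \<and> in_PG n E N \<longrightarrow>
        in_PG n E (\<lambda>i j. f (M i j + N i j) - f (M i j) - f (N i j)))"

end

theory Submission
  imports Defs
begin

text \<open>
  Let \<open>H\<close> be the union of the first \<open>k\<close> cliques, \<open>C\<close> the next one and \<open>S = H \<inter> C\<close>, a clique.
  No edge joins \<open>C - H\<close> to \<open>H - C\<close>, so Schur complements with respect to the vertices of
  \<open>C - H\<close> split a matrix \<open>M \<in> \<P>\<^sub>G\<close> as \<open>M = M\<^sub>1 + M\<^sub>2\<close> with \<open>M\<^sub>1, M\<^sub>2\<close> positive semidefinite,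
  \<open>M\<^sub>1\<close> supported on \<open>C\<close> and \<open>M\<^sub>2\<close> supported on \<open>H\<close>. Since \<open>f 0 = 0\<close>,
  \<open>f[M] = f[M\<^sub>1] \<oplus> f[M\<^sub>2] \<oplus> (f[M\<^sub>1 + M\<^sub>2] - f[M\<^sub>1] - f[M\<^sub>2])\<close> as a sum of matrices supported
  on \<open>C\<close>, \<open>H\<close> and \<open>S\<close>: the first summand is positive by the hypothesis on \<open>\<P>\<^sub>K\<^sub>c\<close>, the
  second by induction on \<open>k\<close>, the third by super-additivity on \<open>\<P>\<^sub>K\<^sub>s\<close>.
\<close>

definition quad_form :: "nat set \<Rightarrow> (nat \<Rightarrow> nat \<Rightarrow> real) \<Rightarrow> (nat \<Rightarrow> real) \<Rightarrow> real" where
  "quad_form I M x = (\<Sum>i\<in>I. \<Sum>j\<in>I. x i * M i j * x j)"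

lemma psd_on_iff_quad_form:
  "psd_on I M \<longleftrightarrow> (\<forall>i\<in>I. \<forall>j\<in>I. M i j = M j i) \<and> (\<forall>x. 0 \<le> quad_form I M x)"
  by (simp add: psd_on_def quad_form_def)

lemma psd_on_empty: "psd_on {} M"
  by (simp add: psd_on_def)

lemma psd_on_cong:
  assumes "psd_on I P" "\<And>i j. i \<in> I \<Longrightarrow> j \<in> I \<Longrightarrow> P i j = R i j"
  shows "psd_on I R"
proof -
  have "quad_form I R x = quad_form I P x" for x
    unfolding quad_form_def using assms(2) by (auto intro!: sum.cong)
  then show ?thesis using assms unfolding psd_on_iff_quad_form by metis
qed

lemma psd_on_add:
  assumes "psd_on I P" "psd_on I R"
  shows "psd_on I (\<lambda>i j. P i j + R i j)"
proof -
  have "quad_form I (\<lambda>i j. P i j + R i j) x = quad_form I P x + quad_form I R x" for x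
    unfolding quad_form_def by (simp add: distrib_left distrib_right sum.distrib)
  then show ?thesis using assms unfolding psd_on_iff_quad_form by (metis add_nonneg_nonneg)
qed

lemma quad_form_zero_extend:
  assumes "finite L" "K \<subseteq> L"
  shows "quad_form L (\<lambda>i j. if i \<in> K \<and> j \<in> K then P i j else 0) x = quad_form K P x"
    and "quad_form L P (\<lambda>i. if i \<in> K then x i else 0) = quad_form K P x"
proof -
  have "quad_form L (\<lambda>i j. if i \<in> K \<and> j \<in> K then P i j else 0) x
      = (\<Sum>i\<in>L. if i \<in> K then (\<Sum>j\<in>L. if j \<in> K then x i * P i j * x j else 0) else 0)"
   and "quad_form L P (\<lambda>i. if i \<in> K then x i else 0)
      = (\<Sum>i\<in>L. if i \<in> K then (\<Sum>j\<in>L. if j \<in> K then x i * P i j * x j else 0) else 0)"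
    unfolding quad_form_def by (auto intro!: sum.cong)
  moreover have "(\<Sum>i\<in>L. if i \<in> K then (\<Sum>j\<in>L. if j \<in> K then x i * P i j * x j else 0) else 0)
      = quad_form K P x"
    unfolding quad_form_def using assms by (simp add: sum.If_cases Int_absorb1)
  ultimately show "quad_form L (\<lambda>i j. if i \<in> K \<and> j \<in> K then P i j else 0) x = quad_form K P x"
    and "quad_form L P (\<lambda>i. if i \<in> K then x i else 0) = quad_form K P x"
    by simp_all
qed

lemma psd_on_subset:
  assumes "psd_on L P" "finite L" "K \<subseteq> L"
  shows "psd_on K P"
  using assms quad_form_zero_extend(2)[OF assms(2,3)] unfolding psd_on_iff_quad_form
  by (metis subsetD)

lemma psd_on_zero_extend:
  assumes "psd_on K P" "finite L" "K \<subseteq> L"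
  shows "psd_on L (\<lambda>i j. if i \<in> K \<and> j \<in> K then P i j else 0)"
  using assms quad_form_zero_extend(1)[OF assms(2,3)] unfolding psd_on_iff_quad_form by auto

lemma psd_on_reindex:
  assumes "bij_betw h K J" "psd_on J N"
  shows "psd_on K (\<lambda>a b. N (h a) (h b))"
proof -
  have "0 \<le> quad_form K (\<lambda>a b. N (h a) (h b)) x" for x
  proof -
    define y where "y i = x (inv_into K h i)" for i
    have y: "y (h a) = x a" if "a \<in> K" for a
      unfolding y_def using assms(1) that bij_betw_inv_into_left by metis
    have "quad_form J N y = (\<Sum>a\<in>K. \<Sum>j\<in>J. y (h a) * N (h a) j * y j)"
      unfolding quad_form_def using sum.reindex_bij_betw[OF assms(1), symmetric] by blast
    also have "\<dots> = (\<Sum>a\<in>K. \<Sum>b\<in>K. y (h a) * N (h a) (h b) * y (h b))"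
      by (rule sum.cong[OF refl], rule sum.reindex_bij_betw[OF assms(1), symmetric])
    also have "\<dots> = quad_form K (\<lambda>a b. N (h a) (h b)) x"
      unfolding quad_form_def by (intro sum.cong) (auto simp: y)
    finally show ?thesis using assms(2) unfolding psd_on_iff_quad_form by metis
  qed
  moreover have "\<forall>a\<in>K. \<forall>b\<in>K. N (h a) (h b) = N (h b) (h a)"
    using assms unfolding psd_on_iff_quad_form bij_betw_def by auto
  ultimately show ?thesis unfolding psd_on_iff_quad_form by auto
qed

lemma in_PG_complete_graph_iff: "in_PG m (complete_graph m) M \<longleftrightarrow> psd_on {0..<m} M"
  by (auto simp: in_PG_def complete_graph_def)

text \<open>Relabel \<open>J\<close> by \<open>{0..<card J}\<close> and pad with zeros up to size \<open>m\<close>.\<close>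

lemma psd_on_entrywise2_transfer:
  fixes g :: "real \<Rightarrow> real \<Rightarrow> real"
  assumes "finite J" "card J \<le> m"
    and g: "\<And>A B. psd_on {0..<m} A \<Longrightarrow> psd_on {0..<m} B \<Longrightarrow>
              psd_on {0..<m} (\<lambda>i j. g (A i j) (B i j))"
    and "psd_on J N\<^sub>1" "psd_on J N\<^sub>2"
  shows "psd_on J (\<lambda>i j. g (N\<^sub>1 i j) (N\<^sub>2 i j))"
proof -
  obtain h where h: "bij_betw h {0..<card J} J"
    using ex_bij_betw_nat_finite[OF assms(1)] by blast
  let ?K = "{0..<card J}"
  define pad :: "(nat \<Rightarrow> nat \<Rightarrow> real) \<Rightarrow> nat \<Rightarrow> nat \<Rightarrow> real"
    where "pad N = (\<lambda>a b. if a \<in> ?K \<and> b \<in> ?K then N (h a) (h b) else 0)" for N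
  have pad: "psd_on {0..<m} (pad N)" if "psd_on J N" for N
    unfolding pad_def using assms(2) by (intro psd_on_zero_extend psd_on_reindex[OF h that]) auto
  have "psd_on {0..<m} (\<lambda>i j. g (pad N\<^sub>1 i j) (pad N\<^sub>2 i j))"
    using g pad assms(4,5) by blast
  then have "psd_on ?K (\<lambda>i j. g (pad N\<^sub>1 i j) (pad N\<^sub>2 i j))"
    by (rule psd_on_subset) (use assms(2) in auto)
  then have "psd_on ?K (\<lambda>a b. g (N\<^sub>1 (h a) (h b)) (N\<^sub>2 (h a) (h b)))"
    by (rule psd_on_cong) (simp add: pad_def)
  then have "psd_on J (\<lambda>i j. g (N\<^sub>1 (h (inv_into ?K h i)) (h (inv_into ?K h j)))
                               (N\<^sub>2 (h (inv_into ?K h i)) (h (inv_into ?K h j))))"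
    by (rule psd_on_reindex[OF bij_betw_inv_into[OF h]])
  then show ?thesis
    by (rule psd_on_cong) (simp add: bij_betw_inv_into_right[OF h])
qed

lemma preserves_positivity_complete_graph_psd_on:
  assumes "preserves_positivity m (complete_graph m) f" "finite J" "card J \<le> m" "psd_on J N"
  shows "psd_on J (\<lambda>i j. f (N i j))"
  using psd_on_entrywise2_transfer[OF assms(2,3), of "\<lambda>x y. f x", OF _ assms(4) assms(4)] assms(1)
  by (simp add: preserves_positivity_def in_PG_complete_graph_iff entrywise_def)

lemma loewner_superadditive_complete_graph_psd_on:
  assumes "loewner_superadditive m (complete_graph m) f" "finite J" "card J \<le> m"
    and "psd_on J P" "psd_on J Q"
  shows "psd_on J (\<lambda>i j. f (P i j + Q i j) - f (P i j) - f (Q i j))"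
  using psd_on_entrywise2_transfer[OF assms(2,3), of "\<lambda>x y. f (x + y) - f x - f y", OF _ assms(4,5)]
    assms(1)
  by (simp add: loewner_superadditive_def in_PG_complete_graph_iff)

lemma quad_form_zero_vector: "quad_form I M (\<lambda>_. 0) = 0"
  by (simp add: quad_form_def)

lemma quad_form_add_unit:
  assumes "finite I" "v \<in> I" "\<forall>i\<in>I. \<forall>j\<in>I. M i j = M j i"
  shows "quad_form I M (\<lambda>k. x k + (if k = v then t else 0)) =
         quad_form I M x + 2 * t * (\<Sum>i\<in>I. x i * M i v) + t\<^sup>2 * M v v"
proof -
  let ?e = "\<lambda>k::nat. if k = v then t else 0"
  have expand: "quad_form I M (\<lambda>k. x k + ?e k) = quad_form I M x
      + (\<Sum>i\<in>I. \<Sum>j\<in>I. ?e i * M i j * x j) + (\<Sum>i\<in>I. \<Sum>j\<in>I. x i * M i j * ?e j)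
      + (\<Sum>i\<in>I. \<Sum>j\<in>I. ?e i * M i j * ?e j)"
    unfolding quad_form_def by (simp add: distrib_left distrib_right sum.distrib algebra_simps)
  have "(\<Sum>i\<in>I. \<Sum>j\<in>I. ?e i * M i j * x j)
      = (\<Sum>i\<in>I. if i = v then (\<Sum>j\<in>I. t * M i j * x j) else 0)"
    by (rule sum.cong) auto
  also have "\<dots> = t * (\<Sum>j\<in>I. M v j * x j)"
    using assms(1,2) by (simp add: sum_distrib_left mult.assoc)
  also have "(\<Sum>j\<in>I. M v j * x j) = (\<Sum>i\<in>I. x i * M i v)"
    using assms(2,3) by (intro sum.cong) auto
  finally have row: "(\<Sum>i\<in>I. \<Sum>j\<in>I. ?e i * M i j * x j) = t * (\<Sum>i\<in>I. x i * M i v)" .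
  have col: "(\<Sum>i\<in>I. \<Sum>j\<in>I. x i * M i j * ?e j) = t * (\<Sum>i\<in>I. x i * M i v)"
    using assms(1,2)
    by (simp add: if_distrib sum.delta sum_distrib_left mult.commute mult.left_commute cong: if_cong)
  have "(\<Sum>i\<in>I. \<Sum>j\<in>I. ?e i * M i j * ?e j)
      = (\<Sum>i\<in>I. if i = v then (\<Sum>j\<in>I. if j = v then t * M i j * t else 0) else 0)"
    by (intro sum.cong refl) (auto intro!: sum.cong)
  also have "\<dots> = t\<^sup>2 * M v v"
    using assms(1,2) by (simp add: power2_eq_square)
  finally have diag: "(\<Sum>i\<in>I. \<Sum>j\<in>I. ?e i * M i j * ?e j) = t\<^sup>2 * M v v" .
  show ?thesis unfolding expand row col diag by simp
qed

lemma quad_form_unit: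
  assumes "finite I" "v \<in> I" "\<forall>i\<in>I. \<forall>j\<in>I. M i j = M j i"
  shows "quad_form I M (\<lambda>k. if k = v then t else 0) = t\<^sup>2 * M v v"
  using quad_form_add_unit[OF assms, of "\<lambda>_. 0" t] by (simp add: quad_form_zero_vector)

lemma quad_form_rank_one:
  "quad_form I (\<lambda>i j. M i v * M v j / d) x = (\<Sum>i\<in>I. x i * M i v) * (\<Sum>j\<in>I. M v j * x j) / d"
  unfolding quad_form_def
  by (simp add: sum_product sum_divide_distrib mult_ac)

lemma quad_form_diff: "quad_form I (\<lambda>i j. P i j - R i j) x = quad_form I P x - quad_form I R x"
  unfolding quad_form_def by (simp add: right_diff_distrib left_diff_distrib sum_subtractf)

lemma psd_on_diag_nonneg:
  assumes "psd_on I M" "finite I" "v \<in> I"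
  shows "0 \<le> M v v"
proof -
  have "\<forall>i\<in>I. \<forall>j\<in>I. M i j = M j i" "0 \<le> quad_form I M (\<lambda>k. if k = v then 1 else 0)"
    using assms(1) unfolding psd_on_iff_quad_form by blast+
  then show ?thesis using quad_form_unit[OF assms(2,3), of M 1] by simp
qed

lemma psd_on_diag_zero_imp_zero:
  assumes "psd_on I M" "finite I" "v \<in> I" "j \<in> I" "M v v = 0"
  shows "M j v = 0"
proof (rule ccontr)
  assume nz: "M j v \<noteq> 0"
  have sym: "\<forall>i\<in>I. \<forall>j\<in>I. M i j = M j i" using assms(1) unfolding psd_on_iff_quad_form by blast
  have "(\<Sum>i\<in>I. (if i = j then 1 else 0) * M i v) = (\<Sum>i\<in>I. if i = j then M i v else 0)"
    by (rule sum.cong) auto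
  then have row: "(\<Sum>i\<in>I. (if i = j then 1 else 0) * M i v) = M j v"
    using assms(2,4) by simp
  define t where "t = - (M j j + 1) / (2 * M j v)"
  have "0 \<le> quad_form I M (\<lambda>k. (if k = j then 1 else 0) + (if k = v then t else 0))"
    using assms(1) unfolding psd_on_iff_quad_form by blast
  also have "\<dots> = M j j + 2 * t * M j v"
    using quad_form_add_unit[OF assms(2,3) sym, of "\<lambda>k. if k = j then 1 else 0" t]
      quad_form_unit[OF assms(2,4) sym, of 1] row assms(5) by simp
  also have "\<dots> = -1"
    unfolding t_def using nz by (simp add: field_simps)
  finally show False by simp
qed

text \<open>If \<open>M v v = 0\<close> then \<open>R = 0\<close> by division by zero, and row and column \<open>v\<close> of \<open>M\<close> already
  vanish.\<close>

lemma psd_on_schur_pivot: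
  assumes "psd_on I M" "finite I" "v \<in> I"
  defines "R \<equiv> \<lambda>i j. M i v * M v j / M v v"
  shows "psd_on I R" "psd_on I (\<lambda>i j. M i j - R i j)"
    and "\<And>j. j \<in> I \<Longrightarrow> M v j - R v j = 0" "\<And>j. j \<in> I \<Longrightarrow> M j v - R j v = 0"
proof -
  have sym: "\<forall>i\<in>I. \<forall>j\<in>I. M i j = M j i" using assms(1) unfolding psd_on_iff_quad_form by blast
  have nonneg: "0 \<le> quad_form I M x" for x using assms(1) unfolding psd_on_iff_quad_form by blast
  have d: "0 \<le> M v v" by (rule psd_on_diag_nonneg[OF assms(1-3)])
  define p where "p x = (\<Sum>i\<in>I. x i * M i v)" for x
  have p: "(\<Sum>j\<in>I. M v j * x j) = p x" for x
    unfolding p_def using sym assms(3) by (intro sum.cong) auto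
  have R: "quad_form I R x = p x * p x / M v v" for x
    unfolding R_def quad_form_rank_one p by (simp add: p_def)
  have symR: "\<forall>i\<in>I. \<forall>j\<in>I. R i j = R j i"
  proof (intro ballI)
    fix i j assume "i \<in> I" "j \<in> I"
    then have "M i v = M v i" "M v j = M j v" using sym assms(3) by blast+
    then show "R i j = R j i" unfolding R_def by simp
  qed
  show "psd_on I R"
    unfolding psd_on_iff_quad_form R using symR d by simp
  have "0 \<le> quad_form I M x - p x * p x / M v v" for x
  proof (cases "M v v = 0")
    case True then show ?thesis using nonneg by simp
  next
    case False
    \<comment> \<open>complete the square in the direction \<open>e\<^sub>v\<close>\<close>
    have "0 \<le> quad_form I M (\<lambda>k. x k + (if k = v then - p x / M v v else 0))" by (rule nonneg)
    also have "\<dots> = quad_form I M x - p x * p x / M v v"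
      using quad_form_add_unit[OF assms(2,3) sym, of x "- p x / M v v"] False
      unfolding p_def by (simp add: power2_eq_square field_simps)
    finally show ?thesis .
  qed
  then show "psd_on I (\<lambda>i j. M i j - R i j)"
    unfolding psd_on_iff_quad_form quad_form_diff R using sym symR by auto
  show "M v j - R v j = 0" if "j \<in> I" for j
    using psd_on_diag_zero_imp_zero[OF assms(1,2,3) that] sym that assms(3)
    unfolding R_def by (cases "M v v = 0") auto
  show "M j v - R j v = 0" if "j \<in> I" for j
    using psd_on_diag_zero_imp_zero[OF assms(1,2,3) that]
    unfolding R_def by (cases "M v v = 0") simp_all
qed

text \<open>Pivot successively on the vertices of \<open>A\<close>; since no row of \<open>A\<close> reaches outside \<open>A \<union> S\<close>,
  the pivots never touch entries outside \<open>(A \<union> S) \<times> (A \<union> S)\<close>.\<close>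

lemma psd_on_schur_elim:
  assumes "psd_on I M" "finite I" "A \<subseteq> I" "S \<subseteq> I" "A \<inter> S = {}"
    and "\<forall>i\<in>A. \<forall>j\<in>I - (A \<union> S). M i j = 0"
  shows "\<exists>M\<^sub>2. psd_on I M\<^sub>2 \<and> psd_on I (\<lambda>i j. M i j - M\<^sub>2 i j) \<and>
     (\<forall>i\<in>I. \<forall>j\<in>I. i \<in> A \<or> j \<in> A \<longrightarrow> M\<^sub>2 i j = 0) \<and>
     (\<forall>i\<in>I. \<forall>j\<in>I. \<not> (i \<in> A \<union> S \<and> j \<in> A \<union> S) \<longrightarrow> M\<^sub>2 i j = M i j)"
  using finite_subset[OF assms(3,2)] assms(1,3-6)
proof (induction A arbitrary: M rule: finite_induct)
  case empty
  have "psd_on I (\<lambda>i j. M i j - M i j)" by (simp add: psd_on_def)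
  with empty show ?case by (intro exI[of _ M]) auto
next
  case (insert v A)
  have v: "v \<in> I" "v \<notin> S" using insert.prems by auto
  have sym: "\<forall>i\<in>I. \<forall>j\<in>I. M i j = M j i"
    using insert.prems(1) unfolding psd_on_iff_quad_form by blast
  define R where "R i j = M i v * M v j / M v v" for i j
  define M' where "M' i j = M i j - R i j" for i j
  note pivot = psd_on_schur_pivot[OF insert.prems(1) assms(2) v(1), folded R_def, folded M'_def]
  have "\<forall>i\<in>A. \<forall>j\<in>I - (A \<union> S). M' i j = 0"
  proof (intro ballI)
    fix i j assume i: "i \<in> A" and j: "j \<in> I - (A \<union> S)"
    show "M' i j = 0"
    proof (cases "j = v")
      case True then show ?thesis using pivot(4) i insert.prems(2) by auto
    next
      case False
      then have "M i j = 0" "M v j = 0" using insert.prems(5) i j by auto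
      then show ?thesis by (simp add: M'_def R_def)
    qed
  qed
  then obtain M\<^sub>2 where M\<^sub>2: "psd_on I M\<^sub>2" "psd_on I (\<lambda>i j. M' i j - M\<^sub>2 i j)"
      "\<forall>i\<in>I. \<forall>j\<in>I. i \<in> A \<or> j \<in> A \<longrightarrow> M\<^sub>2 i j = 0"
      "\<forall>i\<in>I. \<forall>j\<in>I. \<not> (i \<in> A \<union> S \<and> j \<in> A \<union> S) \<longrightarrow> M\<^sub>2 i j = M' i j"
    using insert.IH[of M'] insert.prems pivot(2) by auto
  show ?case
  proof (intro exI[of _ M\<^sub>2] conjI)
    show "psd_on I M\<^sub>2" by (rule M\<^sub>2(1))
    show "psd_on I (\<lambda>i j. M i j - M\<^sub>2 i j)"
      using psd_on_add[OF pivot(1) M\<^sub>2(2)] by (rule psd_on_cong) (simp add: M'_def)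
    show "\<forall>i\<in>I. \<forall>j\<in>I. i \<in> insert v A \<or> j \<in> insert v A \<longrightarrow> M\<^sub>2 i j = 0"
      using M\<^sub>2(3,4) pivot(3,4) v insert.hyps(2) by (auto simp: M'_def)
    show "\<forall>i\<in>I. \<forall>j\<in>I. \<not> (i \<in> insert v A \<union> S \<and> j \<in> insert v A \<union> S) \<longrightarrow> M\<^sub>2 i j = M i j"
    proof (intro ballI impI)
      fix i j assume ij: "i \<in> I" "j \<in> I" "\<not> (i \<in> insert v A \<union> S \<and> j \<in> insert v A \<union> S)"
      then have "M v i = 0 \<or> M v j = 0" using insert.prems(5) by auto
      then have "R i j = 0" using sym ij(1) v(1) by (auto simp: R_def)
      then show "M\<^sub>2 i j = M i j" using M\<^sub>2(4) ij by (auto simp: M'_def)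
    qed
  qed
qed

lemma psd_on_entrywise_of_supported_sum:
  fixes f :: "real \<Rightarrow> real" and M\<^sub>1 M\<^sub>2 :: "nat \<Rightarrow> nat \<Rightarrow> real"
  assumes "finite I" "I = C \<union> H" "f 0 = 0"
    and supp\<^sub>1: "\<And>i j. i \<in> I \<Longrightarrow> j \<in> I \<Longrightarrow> \<not> (i \<in> C \<and> j \<in> C) \<Longrightarrow> M\<^sub>1 i j = 0"
    and supp\<^sub>2: "\<And>i j. i \<in> I \<Longrightarrow> j \<in> I \<Longrightarrow> \<not> (i \<in> H \<and> j \<in> H) \<Longrightarrow> M\<^sub>2 i j = 0"
    and "psd_on C (\<lambda>i j. f (M\<^sub>1 i j))" "psd_on H (\<lambda>i j. f (M\<^sub>2 i j))"
    and "psd_on (C \<inter> H) (\<lambda>i j. f (M\<^sub>1 i j + M\<^sub>2 i j) - f (M\<^sub>1 i j) - f (M\<^sub>2 i j))"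
  shows "psd_on I (\<lambda>i j. f (M\<^sub>1 i j + M\<^sub>2 i j))"
proof -
  have "psd_on I (\<lambda>i j. ((if i \<in> C \<and> j \<in> C then f (M\<^sub>1 i j) else 0)
      + (if i \<in> H \<and> j \<in> H then f (M\<^sub>2 i j) else 0))
      + (if i \<in> C \<inter> H \<and> j \<in> C \<inter> H then f (M\<^sub>1 i j + M\<^sub>2 i j) - f (M\<^sub>1 i j) - f (M\<^sub>2 i j) else 0))"
    using assms by (intro psd_on_add psd_on_zero_extend) auto
  then show ?thesis
  proof (rule psd_on_cong)
    fix i j assume "i \<in> I" "j \<in> I"
    then show "((if i \<in> C \<and> j \<in> C then f (M\<^sub>1 i j) else 0)
      + (if i \<in> H \<and> j \<in> H then f (M\<^sub>2 i j) else 0))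
      + (if i \<in> C \<inter> H \<and> j \<in> C \<inter> H then f (M\<^sub>1 i j + M\<^sub>2 i j) - f (M\<^sub>1 i j) - f (M\<^sub>2 i j) else 0)
      = f (M\<^sub>1 i j + M\<^sub>2 i j)"
      using supp\<^sub>1[of i j] supp\<^sub>2[of i j] \<open>f 0 = 0\<close> by auto
  qed
qed

text \<open>The hypothesis on \<open>H\<close> only concerns matrices that agree with \<open>M\<close> off \<open>C \<times> C\<close>, so that
  it can be discharged by induction over a graph on \<open>H\<close>.\<close>

lemma psd_on_entrywise_clique_sum:
  fixes f :: "real \<Rightarrow> real"
  assumes "psd_on I M" "finite I" "I = C \<union> H" "f 0 = 0"
    and sep: "\<And>i j. i \<in> C - H \<Longrightarrow> j \<in> H - C \<Longrightarrow> M i j = 0"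
    and f_C: "\<And>P. psd_on C P \<Longrightarrow> psd_on C (\<lambda>i j. f (P i j))"
    and f_S: "\<And>P Q. psd_on (C \<inter> H) P \<Longrightarrow> psd_on (C \<inter> H) Q \<Longrightarrow>
                psd_on (C \<inter> H) (\<lambda>i j. f (P i j + Q i j) - f (P i j) - f (Q i j))"
    and f_H: "\<And>P. psd_on H P \<Longrightarrow> \<forall>i\<in>H. \<forall>j\<in>H. \<not> (i \<in> C \<and> j \<in> C) \<longrightarrow> P i j = M i j \<Longrightarrow>
                psd_on H (\<lambda>i j. f (P i j))"
  shows "psd_on I (\<lambda>i j. f (M i j))"
proof -
  have sub: "C - H \<subseteq> I" "C \<inter> H \<subseteq> I" "C \<subseteq> I" "H \<subseteq> I" using assms(3) by auto
  have disj: "(C - H) \<inter> (C \<inter> H) = {}" and C: "C - H \<union> C \<inter> H = C" by blast+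
  have "\<forall>i\<in>C - H. \<forall>j\<in>I - C. M i j = 0" using sep assms(3) by auto
  then obtain M\<^sub>2 where M\<^sub>2: "psd_on I M\<^sub>2" "psd_on I (\<lambda>i j. M i j - M\<^sub>2 i j)"
      "\<forall>i\<in>I. \<forall>j\<in>I. i \<in> C - H \<or> j \<in> C - H \<longrightarrow> M\<^sub>2 i j = 0"
      "\<forall>i\<in>I. \<forall>j\<in>I. \<not> (i \<in> C \<and> j \<in> C) \<longrightarrow> M\<^sub>2 i j = M i j"
    using psd_on_schur_elim[OF assms(1,2) sub(1,2) disj] unfolding C by blast
  define M\<^sub>1 where "M\<^sub>1 i j = M i j - M\<^sub>2 i j" for i j
  have "psd_on I (\<lambda>i j. f (M\<^sub>1 i j + M\<^sub>2 i j))"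
  proof (rule psd_on_entrywise_of_supported_sum[where f = f, OF assms(2,3,4)])
    show "M\<^sub>1 i j = 0" if "i \<in> I" "j \<in> I" "\<not> (i \<in> C \<and> j \<in> C)" for i j
      using M\<^sub>2(4) that by (simp add: M\<^sub>1_def)
    show "M\<^sub>2 i j = 0" if "i \<in> I" "j \<in> I" "\<not> (i \<in> H \<and> j \<in> H)" for i j
      using M\<^sub>2(3) that assms(3) by auto
    show "psd_on C (\<lambda>i j. f (M\<^sub>1 i j))"
      using f_C psd_on_subset[OF M\<^sub>2(2) assms(2) sub(3)] by (simp add: M\<^sub>1_def)
    show "psd_on H (\<lambda>i j. f (M\<^sub>2 i j))"
      using f_H psd_on_subset[OF M\<^sub>2(1) assms(2) sub(4)] M\<^sub>2(4) sub(4) by blast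
    show "psd_on (C \<inter> H) (\<lambda>i j. f (M\<^sub>1 i j + M\<^sub>2 i j) - f (M\<^sub>1 i j) - f (M\<^sub>2 i j))"
      unfolding M\<^sub>1_def
      by (rule f_S[OF psd_on_subset[OF M\<^sub>2(2) assms(2) sub(2)] psd_on_subset[OF M\<^sub>2(1) assms(2) sub(2)]])
  qed
  then show ?thesis by (simp add: M\<^sub>1_def)
qed

lemma maximal_clique_exists:
  assumes "is_clique n E K"
  shows "\<exists>C. maximal_clique n E C \<and> K \<subseteq> C"
proof -
  define F where "F = {D. is_clique n E D \<and> K \<subseteq> D}"
  have "finite F" unfolding F_def is_clique_def
    by (rule finite_subset[of _ "Pow {0..<n}"]) auto
  moreover have "K \<in> F" using assms unfolding F_def by auto
  ultimately obtain D where D: "D \<in> F" "\<And>D'. D' \<in> F \<Longrightarrow> card D' \<le> card D"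
    using Max_in[of "card ` F"] Max_ge[of "card ` F"] by fastforce
  have "maximal_clique n E D"
    unfolding maximal_clique_def
  proof (intro conjI allI impI)
    show "is_clique n E D" using D(1) unfolding F_def by auto
    fix D' assume D': "is_clique n E D' \<and> D \<subseteq> D'"
    then have "D' \<in> F" "finite D'" using D(1) unfolding F_def is_clique_def
      by (auto intro: finite_subset)
    then show "D' = D" using D(2) D' card_subset_eq by (metis antisym card_mono)
  qed
  then show ?thesis using D(1) unfolding F_def by auto
qed

lemma maximal_cliques_cover:
  assumes "set Cs = {C. maximal_clique n E C}"
  shows "(\<Union>l<length Cs. Cs ! l) = {0..<n}"
proof
  show "(\<Union>l<length Cs. Cs ! l) \<subseteq> {0..<n}"
    using assms unfolding maximal_clique_def is_clique_def by (auto dest!: nth_mem)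
  show "{0..<n} \<subseteq> (\<Union>l<length Cs. Cs ! l)"
  proof
    fix v assume "v \<in> {0..<n}"
    then have "is_clique n E {v}" unfolding is_clique_def by auto
    then obtain D where "D \<in> set Cs" "v \<in> D" using maximal_clique_exists assms by blast
    then show "v \<in> (\<Union>l<length Cs. Cs ! l)" by (auto simp: in_set_conv_nth)
  qed
qed

lemma perfect_ordering_subset_prefix:
  assumes "perfect_ordering n E Cs" "m < length Cs" "X \<subseteq> Cs ! m" "X \<subseteq> (\<Union>l\<le>k. Cs ! l)"
  shows "\<exists>l\<le>k. X \<subseteq> Cs ! l"
  using assms(2,3)
proof (induction m rule: less_induct)
  case (less m)
  show ?case
  proof (cases "m \<le> k")
    case True then show ?thesis using less.prems by auto
  next
    case False
    then have "(\<Union>l\<le>k. Cs ! l) \<subseteq> (\<Union>l<m. Cs ! l)" by (intro UN_mono) auto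
    then have "X \<subseteq> sep_set Cs m" using less.prems assms(4) unfolding sep_set_def by auto
    moreover obtain m' where "m' < m" "sep_set Cs m \<subseteq> Cs ! m'"
      using assms(1) less.prems(1) False unfolding perfect_ordering_def by auto
    ultimately show ?thesis using less.IH[of m'] less.prems(1) by auto
  qed
qed

lemma perfect_ordering_new_vertex_nonadjacent:
  assumes "simple_graph n E" "set Cs = {C. maximal_clique n E C}" "perfect_ordering n E Cs"
    and "k < length Cs" "i \<in> Cs ! k - (\<Union>l<k. Cs ! l)" "j \<in> (\<Union>l<k. Cs ! l) - Cs ! k"
  shows "\<not> E i j"
proof
  assume "E i j"
  then have "is_clique n E {i, j}" using assms(1) unfolding simple_graph_def is_clique_def by auto
  then obtain D where "maximal_clique n E D" "{i, j} \<subseteq> D" using maximal_clique_exists by blast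
  then have "D \<in> set Cs" "{i, j} \<subseteq> D" using assms(2) by simp_all
  then obtain m where m: "m < length Cs" "{i, j} \<subseteq> Cs ! m" by (metis in_set_conv_nth)
  have "{i, j} \<subseteq> (\<Union>l\<le>k. Cs ! l)" using assms(5,6) by auto
  then obtain l where l: "l \<le> k" "{i, j} \<subseteq> Cs ! l"
    using perfect_ordering_subset_prefix[OF assms(3) m] by blast
  show False
  proof (cases "l = k")
    case True then show False using l assms(6) by simp
  next
    case False then show False using l assms(5) by auto
  qed
qed

lemma psd_on_entrywise_perfect_ordering_prefix:
  fixes f :: "real \<Rightarrow> real"
  assumes "simple_graph n E" "set Cs = {C. maximal_clique n E C}" "perfect_ordering n E Cs"
    and "f 0 = 0"
    and f_C: "\<And>k P. k < length Cs \<Longrightarrow> psd_on (Cs ! k) P \<Longrightarrow> psd_on (Cs ! k) (\<lambda>i j. f (P i j))"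
    and f_S: "\<And>k P Q. k < length Cs \<Longrightarrow> psd_on (sep_set Cs k) P \<Longrightarrow> psd_on (sep_set Cs k) Q \<Longrightarrow>
      psd_on (sep_set Cs k) (\<lambda>i j. f (P i j + Q i j) - f (P i j) - f (Q i j))"
  shows "k \<le> length Cs \<Longrightarrow> psd_on (\<Union>l<k. Cs ! l) M \<Longrightarrow>
    \<forall>i\<in>\<Union>l<k. Cs ! l. \<forall>j\<in>\<Union>l<k. Cs ! l. i \<noteq> j \<and> \<not> E i j \<longrightarrow> M i j = 0 \<Longrightarrow>
    psd_on (\<Union>l<k. Cs ! l) (\<lambda>i j. f (M i j))"
proof (induction k arbitrary: M)
  case 0 then show ?case by (simp add: psd_on_empty)
next
  case (Suc k)
  define H where "H = (\<Union>l<k. Cs ! l)"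
  define C where "C = Cs ! k"
  have k: "k < length Cs" using Suc.prems(1) by simp
  have I: "(\<Union>l<Suc k. Cs ! l) = C \<union> H" unfolding H_def C_def by (auto simp: lessThan_Suc)
  have "finite (\<Union>l<length Cs. Cs ! l)" using maximal_cliques_cover[OF assms(2)] by simp
  then have fin: "finite (C \<union> H)"
    unfolding I[symmetric] by (rule finite_subset[rotated]) (intro UN_mono, use k in auto)
  have S: "C \<inter> H = sep_set Cs k" unfolding sep_set_def H_def C_def by blast
  have S_clique: "is_clique n E (C \<inter> H)" using assms(3) k unfolding S perfect_ordering_def by blast
  show ?case unfolding I
  proof (rule psd_on_entrywise_clique_sum[where f = f, OF _ fin refl \<open>f 0 = 0\<close>])
    show M: "psd_on (C \<union> H) M" using Suc.prems(2) unfolding I .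
    show "M i j = 0" if "i \<in> C - H" "j \<in> H - C" for i j
    proof -
      have "\<not> E i j"
        using perfect_ordering_new_vertex_nonadjacent[OF assms(1-3) k] that unfolding C_def H_def .
      moreover have "i \<noteq> j" "i \<in> C \<union> H" "j \<in> C \<union> H" using that by auto
      ultimately show ?thesis using Suc.prems(3) unfolding I by blast
    qed
    show "psd_on C (\<lambda>i j. f (P i j))" if "psd_on C P" for P
      using f_C k that unfolding C_def by blast
    show "psd_on (C \<inter> H) (\<lambda>i j. f (P i j + Q i j) - f (P i j) - f (Q i j))"
      if "psd_on (C \<inter> H) P" "psd_on (C \<inter> H) Q" for P Q
      using f_S k that unfolding S by blast
    show "psd_on H (\<lambda>i j. f (P i j))"
      if "psd_on H P" "\<forall>i\<in>H. \<forall>j\<in>H. \<not> (i \<in> C \<and> j \<in> C) \<longrightarrow> P i j = M i j" for P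
    proof -
      have "P i j = 0" if "i \<in> H" "j \<in> H" "i \<noteq> j" "\<not> E i j" for i j
      proof -
        have "\<not> (i \<in> C \<and> j \<in> C)" using S_clique that unfolding is_clique_def by blast
        then show ?thesis using \<open>\<forall>i\<in>H. _\<close> Suc.prems(3) that unfolding I by auto
      qed
      then show ?thesis using Suc.IH[of P] k \<open>psd_on H P\<close> unfolding H_def by auto
    qed
  qed
qed

theorem corollary3p8:
  fixes n :: nat and E :: "nat \<Rightarrow> nat \<Rightarrow> bool" and Cs :: "nat set list"
    and f :: "real \<Rightarrow> real" and c s :: nat
  assumes "simple_graph n E" and "chordal n E"
    and "distinct Cs" and "set Cs = {C. maximal_clique n E C}"
    and "perfect_ordering n E Cs"
    and "c = Max {card (Cs ! i) | i. i < length Cs}"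
    and "s = Max {card (sep_set Cs i) | i. i < length Cs}"
    and "preserves_positivity c (complete_graph c) f"
    and "loewner_superadditive s (complete_graph s) f"
  shows "preserves_positivity n E f"
proof -
  have f0: "f 0 = 0" using assms(9) unfolding loewner_superadditive_def by blast
  have cover: "(\<Union>l<length Cs. Cs ! l) = {0..<n}" by (rule maximal_cliques_cover[OF assms(4)])
  have fin: "finite (Cs ! k)" "finite (sep_set Cs k)" if "k < length Cs" for k
    using cover that by (auto simp: sep_set_def intro: finite_subset)
  have card: "card (Cs ! k) \<le> c" "card (sep_set Cs k) \<le> s" if "k < length Cs" for k
    unfolding assms(6,7) using that by (auto intro!: Max_ge finite_image_set)
  have f_C: "psd_on (Cs ! k) (\<lambda>i j. f (P i j))" if "k < length Cs" "psd_on (Cs ! k) P" for k P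
    using preserves_positivity_complete_graph_psd_on[OF assms(8) fin(1) card(1)] that by blast
  have f_S: "psd_on (sep_set Cs k) (\<lambda>i j. f (P i j + Q i j) - f (P i j) - f (Q i j))"
    if "k < length Cs" "psd_on (sep_set Cs k) P" "psd_on (sep_set Cs k) Q" for k P Q
    using loewner_superadditive_complete_graph_psd_on[OF assms(9) fin(2) card(2)] that by blast
  show ?thesis unfolding preserves_positivity_def
  proof (intro allI impI)
    fix M assume "in_PG n E M"
    then have psd: "psd_on {0..<n} M" and pattern: "\<forall>i\<in>{0..<n}. \<forall>j\<in>{0..<n}. i \<noteq> j \<and> \<not> E i j \<longrightarrow> M i j = 0"
      unfolding in_PG_def by auto
    have "psd_on {0..<n} (\<lambda>i j. f (M i j))"
      by (rule psd_on_entrywise_perfect_ordering_prefix[where f = f and k = "length Cs", OF assms(1,4,5) f0,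
            unfolded cover]) (simp_all add: f_C f_S psd pattern)
    then show "in_PG n E (entrywise f M)"
      using pattern f0 unfolding in_PG_def entrywise_def by simp
  qed
qed

end
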